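(* Let $n\ge1$ and $\sigma\in\mathrm{B}_n$ be such that the closure $\hat\sigma$ is a knot. Then $\zeta(s,\sigma;\beta_{n,q})$, viewed as a rational function of $s$ over $\mathbb{Q}(q)$, has a simple pole at $s=1$, and $$\operatorname{Res}_{s=1}\zeta(s,\sigma;\beta_{n,q})=-\frac{1}{[n]_q}\,\Delta_{\hat\sigma}(q)^{-1},$$ where $\Delta_{\hat\sigma}(q)$ is the Alexander polynomial of $\hat\sigma$ (the identity holding for a suitable representative of $\Delta_{\hat\sigma}$, i.e. up to a unit $\pm q^k$, $k\in\mathbb{Z}$).
   Context: $\mathrm{B}_n$ is the braid group on $n$ strands with standard generators $\sigma_1,\dots,\sigma_{n-1}$. Let $\Lambda=\mathbb{Z}[q^{\pm1}]$. The Burau representation $\beta_{n,q}:\mathrm{B}_n\to \mathrm{GL}_n(\Lambda)$ is the homomorphism with $\beta_{n,q}(\sigma_i)=I_{i-1}\oplus\begin{pmatrix}1-q&1\\ q&0\end{pmatrix}\oplus I_{n-i-1}$. The braid zeta function is $\zeta(s,\sigma;\beta_{n,q}):=\det(I_n-\beta_{n,q}(\sigma)s)^{-1}$. The closure $\hat\sigma$ of a braid is the link obtained by joining the upper endpoints of the strands to the corresponding lower endpoints. $[n]_q:=\frac{1-q^n}{1-q}=1+q+\dots+q^{n-1}$. The Alexander polynomial $\Delta_K(q)\in\Lambda$ of a knot $K$ is well defined only up to multiplication by units $\pm q^k$ of $\Lambda$. *)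

theory Defs
  imports "Jordan_Normal_Form.Determinant" "HOL-Computational_Algebra.Fraction_Field"
begin

type_synonym qfield = "rat poly fract"

definition qq :: qfield where "qq = Fract [:0, 1:] 1"

definition qint :: "nat \<Rightarrow> qfield" where "qint n = (\<Sum>i<n. qq ^ i)"

text \<open>Braid words in B_n: a letter (i, True) is sigma_(i+1), a letter (i, False) is its inverse,
  with 0-based index i < n - 1.\<close>
type_synonym braid_word = "(nat \<times> bool) list"

definition braid_word :: "nat \<Rightarrow> braid_word \<Rightarrow> bool" where
  "braid_word n w \<longleftrightarrow> (\<forall>(i, e) \<in> set w. Suc i < n)"

definition burau_gen :: "nat \<Rightarrow> nat \<times> bool \<Rightarrow> qfield mat" where
  "burau_gen n g = (case g of (i, e) \<Rightarrow>
     mat n n (\<lambda>(r, c).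
       if r = i \<and> c = i then (if e then 1 - qq else 0)
       else if r = i \<and> c = Suc i then (if e then 1 else inverse qq)
       else if r = Suc i \<and> c = i then (if e then qq else 1)
       else if r = Suc i \<and> c = Suc i then (if e then 0 else 1 - inverse qq)
       else if r = c then 1 else 0))"

definition burau :: "nat \<Rightarrow> braid_word \<Rightarrow> qfield mat" where
  "burau n w = foldr (\<lambda>g M. burau_gen n g * M) w (1\<^sub>m n)"

text \<open>det(I_n - beta(sigma) s), a polynomial in s over Q(q), and the braid zeta function as
  a rational function in s over Q(q).\<close>
definition zeta_den :: "nat \<Rightarrow> braid_word \<Rightarrow> qfield poly" where
  "zeta_den n w = det (1\<^sub>m n - map_mat (\<lambda>x. [:0, x:]) (burau n w))"

definition braid_zeta :: "nat \<Rightarrow> braid_word \<Rightarrow> qfield poly fract" where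
  "braid_zeta n w = inverse (Fract (zeta_den n w) 1)"

definition simple_pole_residue :: "'a::field poly fract \<Rightarrow> 'a \<Rightarrow> 'a \<Rightarrow> bool" where
  "simple_pole_residue z a r \<longleftrightarrow>
     (\<exists>g h. h \<noteq> 0 \<and> poly g a \<noteq> 0 \<and> poly h a \<noteq> 0 \<and>
        z = Fract g ([:-a, 1:] * h) \<and> r = poly g a / poly h a)"

text \<open>Closure of a braid: its components correspond to the cycles of the underlying
  permutation; the closure is a knot iff that permutation acts transitively on the strands.\<close>
definition swap_adj :: "nat \<Rightarrow> nat \<Rightarrow> nat" where
  "swap_adj i x = (if x = i then Suc i else if x = Suc i then i else x)"

definition braid_perm :: "braid_word \<Rightarrow> nat \<Rightarrow> nat" where
  "braid_perm w = foldr (\<lambda>g f. swap_adj (fst g) \<circ> f) w id"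

definition closure_is_knot :: "nat \<Rightarrow> braid_word \<Rightarrow> bool" where
  "closure_is_knot n w \<longleftrightarrow> (\<forall>j<n. \<exists>k. (braid_perm w ^^ k) 0 = j)"

text \<open>Free group words on x_0..x_(n-1): (j, True) = x_j, (j, False) = x_j^-1.
  Artin action of B_n on the free group F_n:
  sigma_i : x_i -> x_i x_(i+1) x_i^-1, x_(i+1) -> x_i, others fixed.\<close>
type_synonym fword = "(nat \<times> bool) list"

definition finv :: "fword \<Rightarrow> fword" where
  "finv u = rev (map (\<lambda>(j, e). (j, \<not> e)) u)"

definition artin_letter :: "nat \<times> bool \<Rightarrow> nat \<Rightarrow> fword" where
  "artin_letter g j = (case g of (i, e) \<Rightarrow>
     if e then (if j = i then [(i, True), (Suc i, True), (i, False)]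
                else if j = Suc i then [(i, True)] else [(j, True)])
     else (if j = i then [(Suc i, True)]
           else if j = Suc i then [(Suc i, False), (i, True), (Suc i, True)]
           else [(j, True)]))"

definition subst_word :: "(nat \<Rightarrow> fword) \<Rightarrow> fword \<Rightarrow> fword" where
  "subst_word f u = concat (map (\<lambda>(j, e). if e then f j else finv (f j)) u)"

definition artin_act :: "braid_word \<Rightarrow> nat \<Rightarrow> fword" where
  "artin_act w = foldr (\<lambda>g f. \<lambda>j. subst_word (artin_letter g) (f j)) w (\<lambda>j. [(j, True)])"

text \<open>Abelianized Fox derivative d/dx_j (x_k -> q), with values in Q(q).\<close>
fun fox_ab :: "nat \<Rightarrow> fword \<Rightarrow> qfield" where
  "fox_ab j [] = 0"
| "fox_ab j ((k, e) # u) =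
     (if k = j then (if e then 1 else - inverse qq) else 0)
     + (if e then qq else inverse qq) * fox_ab j u"

text \<open>The closed braid group presentation <x_0..x_(n-1) | artin_act w x_i = x_i>;
  relators r_i = artin_act w x_i * x_i^-1. Alexander polynomial of the closure (a knot):
  determinant of the Alexander matrix (abelianized Fox Jacobian) with the last relator and
  the last generator deleted; this is well defined up to units +-q^k.\<close>
definition alexander :: "nat \<Rightarrow> braid_word \<Rightarrow> qfield" where
  "alexander n w = det (mat (n - 1) (n - 1)
      (\<lambda>(i, j). fox_ab j (artin_act w i @ [(i, False)])))"

end

theory Submission
  imports Defs
begin

text \<open>The Burau matrix \<open>B\<close> of a braid has all column sums \<open>1\<close> and fixes the vector
  \<open>(1, q, ..., q^(n-1))\<close>. Adding all rows of \<open>I - sB\<close> to the last one and replacing its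
  last column by the image of that vector splits off the factor \<open>1 - s\<close> of \<open>det (I - sB)\<close>;
  at \<open>s = 1\<close> Laplace expansion leaves \<open>q^(1-n) [n]_q\<close> times the principal minor of
  \<open>I - B\<close> at the last index. Fox calculus identifies the Alexander matrix of the closed braid
  with the transpose of \<open>B - I\<close>, so this minor is \<open>(-1)^(n-1)\<close> times the Alexander
  polynomial. It is nonzero: once the powers of \<open>q^-1\<close> coming from inverse generators are
  cleared, \<open>B\<close> specialises at \<open>q = 1\<close> to the permutation matrix \<open>P\<close> of the braid, and for
  a transitive permutation a kernel vector of the reduced \<open>I - P\<close> is constant along the single
  orbit and vanishes at the deleted index.\<close>

lemma sum_lessThan_single:
  fixes a n :: nat
  assumes "a < n" "\<And>i. i < n \<Longrightarrow> i \<noteq> a \<Longrightarrow> f i = 0"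
  shows "(\<Sum>i<n. f i) = f a"
proof -
  have "(\<Sum>i<n. f i) = (\<Sum>i\<in>{a}. f i)"
    by (rule sum.mono_neutral_right) (use assms in auto)
  then show ?thesis by simp
qed

lemma sum_lessThan_pair:
  fixes a n :: nat
  assumes "Suc a < n" "\<And>i. i < n \<Longrightarrow> i \<noteq> a \<Longrightarrow> i \<noteq> Suc a \<Longrightarrow> f i = 0"
  shows "(\<Sum>i<n. f i) = f a + f (Suc a)"
proof -
  have "(\<Sum>i<n. f i) = (\<Sum>i\<in>{a, Suc a}. f i)"
    by (rule sum.mono_neutral_right) (use assms in auto)
  then show ?thesis by simp
qed

lemma index_mult_mat_sum:
  assumes "A \<in> carrier_mat n m" "B \<in> carrier_mat m k" "i < n" "j < k"
  shows "(A * B) $$ (i, j) = (\<Sum>l<m. A $$ (i, l) * B $$ (l, j))"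
  using assms by (auto simp: scalar_prod_def atLeast0LessThan intro!: sum.cong)

lemma index_mult_mat_vec_sum:
  assumes "A \<in> carrier_mat n m" "v \<in> carrier_vec m" "i < n"
  shows "(A *\<^sub>v v) $ i = (\<Sum>l<m. A $$ (i, l) * v $ l)"
  using assms by (auto simp: scalar_prod_def atLeast0LessThan intro!: sum.cong)

definition sum_rows_into_last :: "'a::comm_ring_1 mat \<Rightarrow> 'a mat" where
  "sum_rows_into_last A = mat (dim_row A) (dim_col A)
     (\<lambda>(i, j). if i = dim_row A - 1 then \<Sum>k<dim_row A. A $$ (k, j) else A $$ (i, j))"

definition replace_last_col :: "'a::comm_ring_1 mat \<Rightarrow> 'a vec \<Rightarrow> 'a mat" where
  "replace_last_col A v = mat (dim_row A) (dim_col A)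
     (\<lambda>(i, j). if j = dim_col A - 1 then (A *\<^sub>v v) $ i else A $$ (i, j))"

lemma dim_sum_rows_into_last [simp]:
  "dim_row (sum_rows_into_last A) = dim_row A" "dim_col (sum_rows_into_last A) = dim_col A"
  by (simp_all add: sum_rows_into_last_def)

lemma dim_replace_last_col [simp]:
  "dim_row (replace_last_col A v) = dim_row A" "dim_col (replace_last_col A v) = dim_col A"
  by (simp_all add: replace_last_col_def)

lemma det_sum_rows_into_last:
  assumes A: "A \<in> carrier_mat n n"
  shows "det (sum_rows_into_last A) = det A"
proof -
  define R :: "'a mat" where "R = mat n n (\<lambda>(i, j). if i = n - 1 \<or> i = j then 1 else 0)"
  have R: "R \<in> carrier_mat n n" by (simp add: R_def)
  have "sum_rows_into_last A = R * A"
  proof (rule eq_matI)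
    fix i j assume "i < dim_row (R * A)" "j < dim_col (R * A)"
    with R A have ij: "i < n" "j < n" by auto
    then show "sum_rows_into_last A $$ (i, j) = (R * A) $$ (i, j)"
      using A unfolding index_mult_mat_sum[OF R A ij]
      by (auto simp: sum_rows_into_last_def R_def if_distrib[of "\<lambda>x. x * _"] cong: if_cong)
  qed (use R A in \<open>auto simp: sum_rows_into_last_def\<close>)
  moreover have "det R = 1"
    using R by (subst det_lower_triangular[of n])
      (auto simp: R_def prod_list_diag_prod intro!: prod.neutral)
  ultimately show ?thesis using det_mult[OF R A] by simp
qed

lemma det_replace_last_col:
  assumes A: "A \<in> carrier_mat n n" and v: "v \<in> carrier_vec n" and n: "n \<ge> 1"
  shows "det (replace_last_col A v) = v $ (n - 1) * det A"
proof -
  define E :: "'a mat" where "E = mat n n (\<lambda>(i, j). if j = n - 1 then v $ i else if i = j then 1 else 0)"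
  have E: "E \<in> carrier_mat n n" by (simp add: E_def)
  have "replace_last_col A v = A * E"
  proof (rule eq_matI)
    fix i j assume "i < dim_row (A * E)" "j < dim_col (A * E)"
    with A E have ij: "i < n" "j < n" by auto
    then show "replace_last_col A v $$ (i, j) = (A * E) $$ (i, j)"
      using A unfolding index_mult_mat_sum[OF A E ij]
      by (auto simp: replace_last_col_def E_def index_mult_mat_vec_sum[OF A v ij(1)]
          if_distrib[of "\<lambda>x. _ * x"] cong: if_cong simp del: index_mult_mat_vec)
  qed (use A E in \<open>auto simp: replace_last_col_def\<close>)
  moreover have "det E = v $ (n - 1)"
  proof -
    have "det E = (\<Prod>i<n. E $$ (i, i))"
      using E by (subst det_upper_triangular[of _ n])
        (auto simp: E_def prod_list_diag_prod atLeast0LessThan)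
    also have "\<dots> = v $ (n - 1)"
      using n by (subst prod.remove[of _ "n - 1"]) (auto simp: E_def intro!: prod.neutral)
    finally show ?thesis .
  qed
  ultimately show ?thesis using det_mult[OF A E] by (simp add: mult.commute)
qed

lemma det_factor_common_col_sum:
  fixes N :: "'a::comm_ring_1 mat"
  assumes N: "N \<in> carrier_mat n n" and n: "n \<ge> 1" and V: "V \<in> carrier_vec n"
    and col_sum: "\<And>j. j < n \<Longrightarrow> (\<Sum>k<n. N $$ (k, j)) = t"
    and image: "\<And>i. i < n \<Longrightarrow> (N *\<^sub>v V) $ i = V $ i * t"
  shows "V $ (n - 1) * det N = t * det (mat n n (\<lambda>(i, j).
           if i = n - 1 then (if j = n - 1 then \<Sum>k<n. V $ k else 1)
           else if j = n - 1 then V $ i * t else N $$ (i, j)))"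
    (is "_ = t * det ?M")
proof -
  define C where "C = sum_rows_into_last (replace_last_col N V)"
  have NV: "replace_last_col N V \<in> carrier_mat n n"
    using N by (simp add: replace_last_col_def)
  have "det C = V $ (n - 1) * det N"
    unfolding C_def det_sum_rows_into_last[OF NV] by (rule det_replace_last_col[OF N V n])
  moreover have "C = multrow (n - 1) t ?M"
  proof (rule eq_matI)
    fix i j assume "i < dim_row (multrow (n - 1) t ?M)" "j < dim_col (multrow (n - 1) t ?M)"
    then have i: "i < n" and j: "j < n" by auto
    show "C $$ (i, j) = multrow (n - 1) t ?M $$ (i, j)"
      using N i j by (simp add: C_def sum_rows_into_last_def replace_last_col_def image col_sum
          sum_distrib_left mult.commute del: index_mult_mat_vec)
  qed (use N in \<open>auto simp: C_def\<close>)
  moreover have "det (multrow (n - 1) t ?M) = t * det ?M"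
    using n by (intro det_multrow) auto
  ultimately show ?thesis by simp
qed

lemma sum_pCons_zero: "(\<Sum>l\<in>A. [:0, f l:]) = [:0, \<Sum>l\<in>A. f l:]"
  by (induction A rule: infinite_finite_induct) auto

lemma one_minus_X_mat_col_sum:
  fixes B :: "'a::comm_ring_1 mat"
  assumes B: "B \<in> carrier_mat n n" and j: "j < n"
    and fixes_ones: "transpose_mat B *\<^sub>v vec n (\<lambda>_. 1) = vec n (\<lambda>_. 1)"
  shows "(\<Sum>k<n. (1\<^sub>m n - map_mat (\<lambda>x. [:0, x:]) B) $$ (k, j)) = [:1, -1:]"
proof -
  have col_B: "(\<Sum>k<n. B $$ (k, j)) = 1"
    using arg_cong[OF fixes_ones, of "\<lambda>u. u $ j"] B j
    by (simp add: index_mult_mat_vec_sum[of _ n n] atLeast0LessThan scalar_prod_def)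
  have "(\<Sum>k<n. (1\<^sub>m n - map_mat (\<lambda>x. [:0, x:]) B) $$ (k, j))
      = (\<Sum>k<n. (if k = j then 1 else 0) - [:0, B $$ (k, j):])"
    using B j by (intro sum.cong) auto
  also have "\<dots> = 1 - [:0, \<Sum>k<n. B $$ (k, j):]"
    using j by (simp add: sum_subtractf sum_pCons_zero)
  finally show ?thesis
    by (simp add: col_B one_pCons)
qed

lemma one_minus_X_mat_mult_fixed_vec:
  fixes B :: "'a::comm_ring_1 mat"
  assumes B: "B \<in> carrier_mat n n" and v: "v \<in> carrier_vec n" and i: "i < n"
    and fixes_v: "B *\<^sub>v v = v"
  shows "((1\<^sub>m n - map_mat (\<lambda>x. [:0, x:]) B) *\<^sub>v map_vec (\<lambda>x. [:x:]) v) $ i = [:v $ i:] * [:1, -1:]"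
proof -
  have N: "1\<^sub>m n - map_mat (\<lambda>x. [:0, x:]) B \<in> carrier_mat n n" and V: "map_vec (\<lambda>x. [:x:]) v \<in> carrier_vec n"
    using B v by auto
  have row_B: "(\<Sum>k<n. B $$ (i, k) * v $ k) = v $ i"
    using fixes_v index_mult_mat_vec_sum[OF B v i] by simp
  have "((1\<^sub>m n - map_mat (\<lambda>x. [:0, x:]) B) *\<^sub>v map_vec (\<lambda>x. [:x:]) v) $ i
      = (\<Sum>k<n. (if i = k then [:v $ k:] else 0) - [:0, B $$ (i, k) * v $ k:])"
    unfolding index_mult_mat_vec_sum[OF N V i] using B v i
    by (auto simp: one_pCons intro!: sum.cong)
  also have "\<dots> = [:v $ i:] - [:0, \<Sum>k<n. B $$ (i, k) * v $ k:]"
    using i by (simp add: sum_subtractf sum_pCons_zero)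
  finally show ?thesis
    by (simp add: row_B)
qed

lemma det_last_col_single:
  assumes A: "A \<in> carrier_mat n n" and n: "n \<ge> 1"
    and zero: "\<And>i. i < n - 1 \<Longrightarrow> A $$ (i, n - 1) = 0"
  shows "det A = A $$ (n - 1, n - 1) * det (mat_delete A (n - 1) (n - 1))"
proof -
  have "det A = (\<Sum>i<n. A $$ (i, n - 1) * cofactor A i (n - 1))"
    using n by (intro laplace_expansion_column[OF A]) auto
  also have "\<dots> = A $$ (n - 1, n - 1) * cofactor A (n - 1) (n - 1)"
    using n zero by (intro sum_lessThan_single) auto
  finally show ?thesis by (simp add: cofactor_def)
qed

lemma linear_factor_of_const_mult:
  fixes p q :: "'a::field poly"
  assumes "c \<noteq> 0" and "[:c:] * p = [:1, -1:] * q"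
  shows "p = [:-1, 1:] * smult (- inverse c) q"
proof -
  have "p = smult (inverse c) ([:1, -1:] * q)"
    unfolding assms(2)[symmetric] using assms(1) by simp
  moreover have "[:-1, 1:] = - [:1, -1::'a:]" by simp
  ultimately show ?thesis
    by (simp only: mult_smult_right mult_minus_left mult_minus_right smult_minus_left
        smult_minus_right minus_minus)
qed

interpretation eval_one_hom: comm_ring_hom "\<lambda>p::'a::comm_ring_1 poly. poly p 1"
  by unfold_locales auto

lemma det_one_minus_X_mat_root_one:
  fixes B :: "'a::field mat"
  assumes B: "B \<in> carrier_mat n n" and n: "n \<ge> 1" and v: "v \<in> carrier_vec n" "v $ (n - 1) \<noteq> 0"
    and fixes_v: "B *\<^sub>v v = v"
    and fixes_ones: "transpose_mat B *\<^sub>v vec n (\<lambda>_. 1) = vec n (\<lambda>_. 1)"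
  obtains h where "det (1\<^sub>m n - map_mat (\<lambda>x. [:0, x:]) B) = [:-1, 1:] * h"
    and "poly h 1 = - (\<Sum>k<n. v $ k) / v $ (n - 1) * det (mat_delete (1\<^sub>m n - B) (n - 1) (n - 1))"
proof -
  define N where "N = 1\<^sub>m n - map_mat (\<lambda>x. [:0, x:]) B"
  define V where "V = map_vec (\<lambda>x. [:x:]) v"
  define M where "M = mat n n (\<lambda>(i, j).
    if i = n - 1 then (if j = n - 1 then \<Sum>k<n. V $ k else 1)
    else if j = n - 1 then V $ i * [:1, -1:] else N $$ (i, j))"
  have V_idx: "V $ i = [:v $ i:]" if "i < n" for i
    using v(1) that by (simp add: V_def)
  have "V $ (n - 1) * det N = [:1, -1:] * det M"
    unfolding M_def
  proof (rule det_factor_common_col_sum)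
    show "(\<Sum>k<n. N $$ (k, j)) = [:1, -1:]" if "j < n" for j
      unfolding N_def by (rule one_minus_X_mat_col_sum[OF B that fixes_ones])
    show "(N *\<^sub>v V) $ i = V $ i * [:1, -1:]" if "i < n" for i
      unfolding V_idx[OF that] unfolding N_def V_def
      by (rule one_minus_X_mat_mult_fixed_vec[OF B v(1) that fixes_v])
  qed (use B v(1) n in \<open>auto simp: N_def V_def\<close>)
  then have factor: "[:v $ (n - 1):] * det N = [:1, -1:] * det M"
    using v(1) n by (simp add: V_def)
  define h where "h = smult (- inverse (v $ (n - 1))) (det M)"
  have "det N = [:-1, 1:] * h"
    unfolding h_def using linear_factor_of_const_mult[OF v(2) factor] .
  moreover have "poly (det M) 1 = (\<Sum>k<n. v $ k) * det (mat_delete (1\<^sub>m n - B) (n - 1) (n - 1))"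
  proof -
    have "poly (det M) 1 = det (map_mat (\<lambda>p. poly p 1) M)" by simp
    also have "\<dots> = (\<Sum>k<n. v $ k) * det (mat_delete (map_mat (\<lambda>p. poly p 1) M) (n - 1) (n - 1))"
      using n v(1) by (subst det_last_col_single[of _ n]) (auto simp: M_def V_def poly_sum)
    also have "mat_delete (map_mat (\<lambda>p. poly p 1) M) (n - 1) (n - 1) = mat_delete (1\<^sub>m n - B) (n - 1) (n - 1)"
      using B by (intro eq_matI) (auto simp: M_def N_def mat_delete_def)
    finally show ?thesis .
  qed
  then have "poly h 1 = - (\<Sum>k<n. v $ k) / v $ (n - 1) * det (mat_delete (1\<^sub>m n - B) (n - 1) (n - 1))"
    by (simp add: h_def field_simps)
  ultimately show ?thesis using that by (simp add: N_def)
qed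

definition perm_mat :: "nat \<Rightarrow> (nat \<Rightarrow> nat) \<Rightarrow> 'a::{zero, one} mat" where
  "perm_mat n p = mat n n (\<lambda>(r, c). if r = p c then 1 else 0)"

lemma perm_mat_mult:
  assumes "\<And>c. c < n \<Longrightarrow> p c < n"
  shows "perm_mat n f * perm_mat n p = (perm_mat n (f \<circ> p) :: 'a::semiring_1 mat)"
proof (rule eq_matI)
  fix r c assume "r < dim_row (perm_mat n (f \<circ> p) :: 'a mat)" "c < dim_col (perm_mat n (f \<circ> p) :: 'a mat)"
  then have r: "r < n" and c: "c < n" by (auto simp: perm_mat_def)
  have "(perm_mat n f * perm_mat n p) $$ (r, c) = (\<Sum>l<n. perm_mat n f $$ (r, l) * perm_mat n p $$ (l, c) :: 'a)"
    by (rule index_mult_mat_sum[OF _ _ r c]) (auto simp: perm_mat_def)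
  also have "\<dots> = perm_mat n f $$ (r, p c)"
    using assms r c by (subst sum_lessThan_single[of "p c"]) (auto simp: perm_mat_def)
  also have "\<dots> = perm_mat n (f \<circ> p) $$ (r, c)"
    using assms r c by (simp add: perm_mat_def)
  finally show "(perm_mat n f * perm_mat n p) $$ (r, c) = (perm_mat n (f \<circ> p) :: 'a mat) $$ (r, c)" .
qed (auto simp: perm_mat_def)

lemma invariant_subset_eq_of_transitive:
  fixes p :: "nat \<Rightarrow> nat"
  assumes maps: "p ` {..<n} \<subseteq> {..<n}" and inj: "inj_on p {..<n}"
    and transitive: "\<And>j. j < n \<Longrightarrow> \<exists>k. (p ^^ k) 0 = j"
    and S: "S \<subseteq> {..<n}" "p ` S \<subseteq> S" "S \<noteq> {}"
  shows "S = {..<n}"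
proof -
  have "p ` S = S"
    using S inj by (intro endo_inj_surj) (auto intro: finite_subset inj_on_subset)
  moreover have "p ` {..<n} = {..<n}"
    using maps inj by (intro endo_inj_surj) auto
  ultimately have "p ` ({..<n} - S) = {..<n} - S"
    using inj S(1) by (simp add: inj_on_image_set_diff)
  have orbit: "(p ^^ k) x \<in> T" if "x \<in> T" "p ` T = T" for k x and T :: "nat set"
    using that by (induction k) auto
  have "0 \<in> S"
  proof (rule ccontr)
    assume "0 \<notin> S"
    then have "0 \<in> {..<n} - S" using S by auto
    then have "j \<notin> S" if "j < n" for j
      using transitive[OF that] orbit[of 0 "{..<n} - S"] \<open>p ` ({..<n} - S) = _\<close> by auto
    then show False using S by auto
  qed
  then show ?thesis
    using S transitive orbit[of 0 S] \<open>p ` S = S\<close> by auto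
qed

lemma fun_vanishes_of_transitive:
  fixes p :: "nat \<Rightarrow> nat"
  assumes maps: "p ` {..<n} \<subseteq> {..<n}" and inj: "inj_on p {..<n}"
    and transitive: "\<And>j. j < n \<Longrightarrow> \<exists>k. (p ^^ k) 0 = j"
    and last: "x (n - 1) = 0"
    and step: "\<And>y. y < n \<Longrightarrow> p y \<noteq> n - 1 \<Longrightarrow> x (p y) = x y"
    and i: "i < n"
  shows "x i = 0"
proof -
  have "{y. y < n \<and> x y = 0} = {..<n}"
  proof (rule invariant_subset_eq_of_transitive[OF maps inj transitive])
    show "p ` {y. y < n \<and> x y = 0} \<subseteq> {y. y < n \<and> x y = 0}"
    proof clarify
      fix y assume y: "y < n" "x y = 0"
      then have "p y < n" using maps by auto
      moreover have "x (p y) = 0"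
        using y step[OF y(1)] last by (cases "p y = n - 1") auto
      ultimately show "p y < n \<and> x (p y) = 0" ..
    qed
    show "{y. y < n \<and> x y = 0} \<noteq> {}"
    proof -
      have "n - 1 \<in> {y. y < n \<and> x y = 0}" using i last by simp
      then show ?thesis by blast
    qed
  qed auto
  then show ?thesis using i by blast
qed

lemma det_minor_one_minus_perm_mat_nonzero:
  fixes p :: "nat \<Rightarrow> nat"
  assumes n: "n \<ge> 1" and maps: "p ` {..<n} \<subseteq> {..<n}" and inj: "inj_on p {..<n}"
    and transitive: "\<And>j. j < n \<Longrightarrow> \<exists>k. (p ^^ k) 0 = j"
  shows "det (mat_delete (1\<^sub>m n - perm_mat n p) (n - 1) (n - 1) :: 'a::field mat) \<noteq> 0"
proof
  define Z :: "'a mat" where "Z = mat_delete (1\<^sub>m n - perm_mat n p) (n - 1) (n - 1)"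
  have Z: "Z \<in> carrier_mat (n - 1) (n - 1)"
    by (simp add: Z_def perm_mat_def mat_delete_def)
  assume "det (mat_delete (1\<^sub>m n - perm_mat n p) (n - 1) (n - 1) :: 'a mat) = 0"
  then obtain v where v: "v \<in> carrier_vec (n - 1)" "v \<noteq> 0\<^sub>v (n - 1)" "Z *\<^sub>v v = 0\<^sub>v (n - 1)"
    using det_0_iff_vec_prod_zero_field[OF Z] by (auto simp: Z_def)
  define x where "x i = (if i < n - 1 then v $ i else 0)" for i
  have x_step: "x (p y) = x y" if y: "y < n" and py: "p y < n - 1" for y
  proof -
    have "0 = (Z *\<^sub>v v) $ p y" using v(3) py by simp
    also have "\<dots> = (\<Sum>j<n - 1. ((if p y = j then 1 else 0) - (if p y = p j then 1 else 0)) * v $ j)"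
      unfolding index_mult_mat_vec_sum[OF Z v(1) py] using py
      by (intro sum.cong) (auto simp: Z_def perm_mat_def mat_delete_def)
    also have "\<dots> = v $ p y - (\<Sum>j<n - 1. if p y = p j then v $ j else 0)"
      using py by (simp add: sum_subtractf left_diff_distrib if_distrib[of "\<lambda>a. a * _"] cong: if_cong)
    also have "(\<Sum>j<n - 1. if p y = p j then v $ j else 0) = x y"
    proof (cases "y < n - 1")
      case True
      then show ?thesis
        using inj y by (subst sum_lessThan_single[of y]) (auto simp: x_def dest: inj_onD)
    next
      case False
      then show ?thesis
        using inj y by (subst sum.neutral) (auto simp: x_def dest: inj_onD)
    qed
    finally show ?thesis using py by (simp add: x_def)
  qed
  have x_zero: "x i = 0" if "i < n" for i
  proof (rule fun_vanishes_of_transitive[OF maps inj transitive _ _ that])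
    show "x (n - 1) = 0" by (simp add: x_def)
    show "x (p y) = x y" if "y < n" "p y \<noteq> n - 1" for y
      using that maps by (intro x_step) auto
  qed
  have "v = 0\<^sub>v (n - 1)"
  proof (rule eq_vecI)
    fix i assume "i < dim_vec (0\<^sub>v (n - 1) :: 'a vec)"
    then show "v $ i = 0\<^sub>v (n - 1) $ i" using x_zero[of i] by (simp add: x_def)
  qed (use v(1) in simp)
  with v(2) show False ..
qed

interpretation to_fract_hom: inj_comm_ring_hom "to_fract :: rat poly \<Rightarrow> rat poly fract"
  by unfold_locales auto

lemma to_fract_X: "to_fract [:0, 1:] = qq"
  by (simp add: qq_def to_fract_def)

lemma qq_nonzero: "qq \<noteq> 0"
  by (simp add: qq_def eq_fract Zero_fract_def)

lemma burau_gen_carrier: "burau_gen n g \<in> carrier_mat n n"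
  by (simp add: burau_gen_def split: prod.splits)

lemma burau_Nil: "burau n [] = 1\<^sub>m n"
  by (simp add: burau_def)

lemma burau_Cons: "burau n (g # w) = burau_gen n g * burau n w"
  by (simp add: burau_def)

lemma burau_carrier: "burau n w \<in> carrier_mat n n"
  by (induction w) (auto simp: burau_Nil burau_Cons intro!: mult_carrier_mat[OF burau_gen_carrier])

lemma burau_gen_fixes_q_powers:
  assumes "Suc i < n"
  shows "burau_gen n (i, e) *\<^sub>v vec n (\<lambda>k. qq ^ k) = vec n (\<lambda>k. qq ^ k)"
proof (rule eq_vecI)
  fix r assume "r < dim_vec (vec n (\<lambda>k. qq ^ k))"
  then have r: "r < n" by simp
  have "(\<Sum>c<n. burau_gen n (i, e) $$ (r, c) * qq ^ c) = qq ^ r"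
    using assms r qq_nonzero
    by (cases "r = i \<or> r = Suc i")
      (auto simp: burau_gen_def algebra_simps sum_lessThan_pair[of i] sum_lessThan_single[of r])
  then show "(burau_gen n (i, e) *\<^sub>v vec n (\<lambda>k. qq ^ k)) $ r = vec n (\<lambda>k. qq ^ k) $ r"
    using r by (simp add: index_mult_mat_vec_sum[OF burau_gen_carrier] del: index_mult_mat_vec)
qed (use burau_gen_carrier[of n "(i, e)"] in simp)

lemma burau_gen_transpose_fixes_ones:
  assumes "Suc i < n"
  shows "transpose_mat (burau_gen n (i, e)) *\<^sub>v vec n (\<lambda>_. 1) = vec n (\<lambda>_. 1)"
proof (rule eq_vecI)
  fix c assume "c < dim_vec (vec n (\<lambda>_. 1::qfield))"
  then have c: "c < n" by simp
  have "(\<Sum>r<n. burau_gen n (i, e) $$ (r, c)) = 1"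
    using assms c
    by (cases "c = i \<or> c = Suc i")
      (auto simp: burau_gen_def sum_lessThan_pair[of i] sum_lessThan_single[of c])
  then show "(transpose_mat (burau_gen n (i, e)) *\<^sub>v vec n (\<lambda>_. 1)) $ c = vec n (\<lambda>_. 1) $ c"
    using c burau_gen_carrier[of n "(i, e)"]
    by (simp add: index_mult_mat_vec_sum[of _ n n] del: index_mult_mat_vec)
qed (use burau_gen_carrier[of n "(i, e)"] in simp)

lemma burau_fixes_q_powers:
  assumes "braid_word n w"
  shows "burau n w *\<^sub>v vec n (\<lambda>k. qq ^ k) = vec n (\<lambda>k. qq ^ k)"
  using assms
proof (induction w)
  case Nil
  then show ?case by (simp add: burau_Nil)
next
  case (Cons g w)
  obtain i e where g: "g = (i, e)" and i: "Suc i < n" and w: "braid_word n w"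
    using Cons.prems by (cases g) (auto simp: braid_word_def)
  show ?case
    unfolding burau_Cons g assoc_mult_mat_vec[OF burau_gen_carrier burau_carrier vec_carrier]
    by (simp add: Cons.IH[OF w] burau_gen_fixes_q_powers[OF i])
qed

lemma burau_transpose_fixes_ones:
  assumes "braid_word n w"
  shows "transpose_mat (burau n w) *\<^sub>v vec n (\<lambda>_. 1) = vec n (\<lambda>_. 1)"
  using assms
proof (induction w)
  case Nil
  then show ?case by (simp add: burau_Nil)
next
  case (Cons g w)
  obtain i e where g: "g = (i, e)" and i: "Suc i < n" and w: "braid_word n w"
    using Cons.prems by (cases g) (auto simp: braid_word_def)
  have "transpose_mat (burau n w) \<in> carrier_mat n n" "transpose_mat (burau_gen n g) \<in> carrier_mat n n"
    using burau_carrier burau_gen_carrier by auto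
  then show ?case
    unfolding burau_Cons transpose_mult[OF burau_gen_carrier burau_carrier]
    by (simp add: Cons.IH[OF w] g burau_gen_transpose_fixes_ones[OF i])
qed

fun abel :: "fword \<Rightarrow> qfield" where
  "abel [] = 1"
| "abel ((j, e) # u) = (if e then qq else inverse qq) * abel u"

lemma abel_append: "abel (u @ v) = abel u * abel v"
  by (induction u rule: abel.induct) auto

lemma abel_nonzero: "abel u \<noteq> 0"
  by (induction u rule: abel.induct) (auto simp: qq_nonzero)

lemma finv_Nil: "finv [] = []"
  by (simp add: finv_def)

lemma finv_Cons: "finv ((j, e) # u) = finv u @ [(j, \<not> e)]"
  by (simp add: finv_def)

lemma abel_finv: "abel (finv u) = inverse (abel u)"
  by (induction u rule: abel.induct) (auto simp: finv_Nil finv_Cons abel_append qq_nonzero)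

lemma fox_ab_append: "fox_ab k (u @ v) = fox_ab k u + abel u * fox_ab k v"
  by (induction u rule: abel.induct) (auto simp: algebra_simps)

lemma fox_ab_finv: "fox_ab k (finv u) = - inverse (abel u) * fox_ab k u"
proof (induction u rule: abel.induct)
  case 1
  then show ?case by (simp add: finv_Nil)
next
  case (2 j e u)
  then show ?case using qq_nonzero abel_nonzero[of u]
    by (auto simp: finv_Cons fox_ab_append abel_finv field_simps)
qed

lemma subst_word_Nil: "subst_word f [] = []"
  by (simp add: subst_word_def)

lemma subst_word_Cons:
  "subst_word f ((j, e) # u) = (if e then f j else finv (f j)) @ subst_word f u"
  by (simp add: subst_word_def)

lemma abel_subst_word:
  assumes "\<And>m. abel (f m) = qq"
  shows "abel (subst_word f u) = abel u"
  by (induction u rule: abel.induct)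
    (auto simp: subst_word_Nil subst_word_Cons abel_append abel_finv assms)

definition fword_below :: "nat \<Rightarrow> fword \<Rightarrow> bool" where
  "fword_below n u \<longleftrightarrow> (\<forall>(j, e) \<in> set u. j < n)"

lemma fword_below_subst_word:
  assumes "fword_below n u" "\<And>m. m < n \<Longrightarrow> fword_below n (f m)"
  shows "fword_below n (subst_word f u)"
  using assms(1)
  by (induction u rule: abel.induct)
    (auto simp: subst_word_Nil subst_word_Cons fword_below_def finv_def dest: assms(2)[unfolded fword_below_def])

lemma fox_ab_subst_word:
  assumes f: "\<And>m. abel (f m) = qq" and u: "fword_below n u"
  shows "fox_ab k (subst_word f u) = (\<Sum>m<n. fox_ab m u * fox_ab k (f m))"
  using u
proof (induction u rule: abel.induct)
  case 1
  then show ?case by (simp add: subst_word_Nil)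
next
  case (2 j e u)
  have j: "j < n" and u: "fword_below n u" using "2.prems" by (auto simp: fword_below_def)
  have "(\<Sum>m<n. fox_ab m ((j, e) # u) * fox_ab k (f m))
      = (if e then 1 else - inverse qq) * fox_ab k (f j)
        + (if e then qq else inverse qq) * (\<Sum>m<n. fox_ab m u * fox_ab k (f m))"
    using j by (simp add: algebra_simps sum.distrib sum_distrib_left if_distrib[of "\<lambda>x. x * _"]
        if_distrib[of "\<lambda>x. _ * x"] cong: if_cong)
  then show ?case
    by (simp add: subst_word_Cons fox_ab_append fox_ab_finv abel_finv f "2.IH"[OF u])
qed

lemma abel_artin_letter: "abel (artin_letter g m) = qq"
  using qq_nonzero by (cases g) (auto simp: artin_letter_def)

lemma fword_below_artin_letter: "Suc i < n \<Longrightarrow> m < n \<Longrightarrow> fword_below n (artin_letter (i, e) m)"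
  by (auto simp: artin_letter_def fword_below_def)

lemma fox_ab_artin_letter:
  assumes "Suc i < n" "k < n" "m < n"
  shows "fox_ab k (artin_letter (i, e) m) = burau_gen n (i, e) $$ (k, m)"
  using assms qq_nonzero by (auto simp: artin_letter_def burau_gen_def field_simps)

lemma artin_act_Nil: "artin_act [] j = [(j, True)]"
  by (simp add: artin_act_def)

lemma artin_act_Cons: "artin_act (g # w) j = subst_word (artin_letter g) (artin_act w j)"
  by (simp add: artin_act_def)

lemma abel_artin_act: "abel (artin_act w j) = qq"
  by (induction w arbitrary: j) (simp_all add: artin_act_Nil artin_act_Cons abel_subst_word abel_artin_letter)

lemma fword_below_artin_act:
  assumes "braid_word n w" "j < n"
  shows "fword_below n (artin_act w j)"
  using assms
proof (induction w arbitrary: j)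
  case Nil
  then show ?case by (simp add: artin_act_Nil fword_below_def)
next
  case (Cons g w)
  obtain i e where g: "g = (i, e)" and i: "Suc i < n" and w: "braid_word n w"
    using Cons.prems by (cases g) (auto simp: braid_word_def)
  show ?case unfolding artin_act_Cons g
    by (intro fword_below_subst_word Cons.IH[OF w Cons.prems(2)] fword_below_artin_letter[OF i])
qed

lemma fox_ab_artin_act:
  assumes "braid_word n w" "j < n" "k < n"
  shows "fox_ab k (artin_act w j) = burau n w $$ (k, j)"
  using assms
proof (induction w arbitrary: j k)
  case Nil
  then show ?case by (simp add: artin_act_Nil burau_Nil)
next
  case (Cons g w)
  obtain i e where g: "g = (i, e)" and i: "Suc i < n" and w: "braid_word n w"
    using Cons.prems by (cases g) (auto simp: braid_word_def)
  have "fox_ab k (artin_act (g # w) j) = (\<Sum>m<n. fox_ab m (artin_act w j) * fox_ab k (artin_letter g m))"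
    unfolding artin_act_Cons
    by (intro fox_ab_subst_word abel_artin_letter fword_below_artin_act[OF w Cons.prems(2)])
  also have "\<dots> = (\<Sum>m<n. burau_gen n g $$ (k, m) * burau n w $$ (m, j))"
    using Cons.IH[OF w Cons.prems(2)] fox_ab_artin_letter[OF i Cons.prems(3)] g
    by (simp add: mult.commute)
  also have "\<dots> = burau n (g # w) $$ (k, j)"
    using Cons.prems by (simp add: burau_Cons index_mult_mat_sum[OF burau_gen_carrier burau_carrier])
  finally show ?case .
qed

lemma alexander_eq_det_burau:
  assumes "braid_word n w"
  shows "alexander n w =
    det (mat (n - 1) (n - 1) (\<lambda>(i, j). burau n w $$ (j, i) - (if i = j then 1 else 0)))"
  unfolding alexander_def using assms qq_nonzero
  by (intro arg_cong[where f = det] eq_matI)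
    (auto simp: fox_ab_append abel_artin_act fox_ab_artin_act)

lemma braid_perm_Nil: "braid_perm [] = id"
  by (simp add: braid_perm_def)

lemma braid_perm_Cons: "braid_perm (g # w) = swap_adj (fst g) \<circ> braid_perm w"
  by (simp add: braid_perm_def)

lemma braid_perm_less: "braid_word n w \<Longrightarrow> c < n \<Longrightarrow> braid_perm w c < n"
  by (induction w) (auto simp: braid_perm_Nil braid_perm_Cons braid_word_def swap_adj_def)

lemma braid_perm_inj: "inj (braid_perm w)"
proof (induction w)
  case Nil
  then show ?case by (simp add: braid_perm_Nil)
next
  case (Cons g w)
  have "inj (swap_adj (fst g))"
    by (rule injI) (auto simp: swap_adj_def split: if_splits)
  then show ?case unfolding braid_perm_Cons using Cons.IH by (rule inj_compose)
qed

text \<open>The Burau matrix of a generator, multiplied by \<open>q\<close> for an inverse generator,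
  has entries in \<open>\<int>[q]\<close>.\<close>
definition burau_gen_poly :: "nat \<Rightarrow> nat \<times> bool \<Rightarrow> rat poly mat" where
  "burau_gen_poly n g = (case g of (i, e) \<Rightarrow>
     mat n n (\<lambda>(r, c).
       if r = i \<and> c = i then (if e then 1 - [:0, 1:] else 0)
       else if r = i \<and> c = Suc i then 1
       else if r = Suc i \<and> c = i then [:0, 1:]
       else if r = Suc i \<and> c = Suc i then (if e then 0 else [:0, 1:] - 1)
       else if r = c then (if e then 1 else [:0, 1:]) else 0))"

lemma burau_gen_poly_carrier: "burau_gen_poly n g \<in> carrier_mat n n"
  by (simp add: burau_gen_poly_def split: prod.splits)

lemma burau_gen_integral_form:
  "\<exists>c d. c * to_fract d = 1 \<and> poly d 1 = 1 \<and>
    burau_gen n (i, e) = c \<cdot>\<^sub>m map_mat to_fract (burau_gen_poly n (i, e))"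
proof (intro exI conjI)
  show "(if e then 1 else inverse qq) * to_fract (if e then 1 else [:0, 1:]) = 1"
    using qq_nonzero by (simp add: to_fract_X)
  show "poly (if e then 1 else [:0, 1::rat:]) 1 = 1" by simp
  show "burau_gen n (i, e) = (if e then 1 else inverse qq) \<cdot>\<^sub>m map_mat to_fract (burau_gen_poly n (i, e))"
    by (rule eq_matI) (auto simp: burau_gen_def burau_gen_poly_def to_fract_X qq_nonzero field_simps)
qed

lemma burau_gen_poly_at_one:
  "map_mat (\<lambda>p. poly p 1) (burau_gen_poly n (i, e)) = perm_mat n (swap_adj i)"
  by (rule eq_matI) (auto simp: burau_gen_poly_def perm_mat_def swap_adj_def)

lemma smult_map_mat_mult:
  fixes P Q :: "rat poly mat"
  assumes P: "P \<in> carrier_mat n n" and Q: "Q \<in> carrier_mat n n"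
  shows "(a \<cdot>\<^sub>m map_mat to_fract P) * (b \<cdot>\<^sub>m map_mat to_fract Q) = (a * b) \<cdot>\<^sub>m map_mat to_fract (P * Q)"
proof -
  have FP: "map_mat to_fract P \<in> carrier_mat n n" and FQ: "map_mat to_fract Q \<in> carrier_mat n n"
    using P Q by auto
  have "(a \<cdot>\<^sub>m map_mat to_fract P) * (b \<cdot>\<^sub>m map_mat to_fract Q)
      = a \<cdot>\<^sub>m (b \<cdot>\<^sub>m (map_mat to_fract P * map_mat to_fract Q))"
    by (simp add: mult_smult_assoc_mat[OF FP smult_carrier_mat[OF FQ]] mult_smult_distrib[OF FP FQ])
  also have "\<dots> = (a * b) \<cdot>\<^sub>m (map_mat to_fract P * map_mat to_fract Q)"
    by (intro eq_matI) auto
  finally show ?thesis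
    by (simp only: to_fract_hom.mat_hom_mult[OF P Q])
qed

lemma burau_integral_form:
  assumes "braid_word n w"
  shows "\<exists>c d P. c * to_fract d = 1 \<and> poly d 1 = 1 \<and> P \<in> carrier_mat n n \<and>
    burau n w = c \<cdot>\<^sub>m map_mat to_fract P \<and> map_mat (\<lambda>p. poly p 1) P = perm_mat n (braid_perm w)"
  using assms
proof (induction w)
  case Nil
  have "map_mat (\<lambda>p. poly p 1) (1\<^sub>m n) = perm_mat n (braid_perm [])"
    by (rule eq_matI) (auto simp: perm_mat_def braid_perm_Nil)
  then show ?case
    by (intro exI[of _ 1] exI[of _ "1\<^sub>m n"]) (auto simp: burau_Nil)
next
  case (Cons g w)
  obtain i e where g: "g = (i, e)" and w: "braid_word n w"
    using Cons.prems by (cases g) (auto simp: braid_word_def)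
  define G where "G = burau_gen_poly n (i, e)"
  have G: "G \<in> carrier_mat n n" by (simp add: G_def burau_gen_poly_carrier)
  obtain c' d' where cd': "c' * to_fract d' = 1" "poly d' 1 = 1"
    and burau_g: "burau_gen n g = c' \<cdot>\<^sub>m map_mat to_fract G"
    using burau_gen_integral_form unfolding g G_def by blast
  obtain c d P where cd: "c * to_fract d = 1" "poly d 1 = 1" and P: "P \<in> carrier_mat n n"
    and burau_w: "burau n w = c \<cdot>\<^sub>m map_mat to_fract P"
    and P_one: "map_mat (\<lambda>p. poly p 1) P = perm_mat n (braid_perm w)"
    using Cons.IH[OF w] by blast
  have "c' * c * to_fract (d' * d) = (c' * to_fract d') * (c * to_fract d)"
    by (simp add: mult_ac)
  then have "c' * c * to_fract (d' * d) = 1"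
    using cd cd' by simp
  moreover have "burau n (g # w) = (c' * c) \<cdot>\<^sub>m map_mat to_fract (G * P)"
    by (simp add: burau_Cons burau_g burau_w smult_map_mat_mult[OF G P])
  moreover have "map_mat (\<lambda>p. poly p 1) (G * P) = perm_mat n (braid_perm (g # w))"
  proof -
    have "map_mat (\<lambda>p. poly p 1) G = perm_mat n (swap_adj i)"
      by (simp add: G_def burau_gen_poly_at_one)
    then have "map_mat (\<lambda>p. poly p 1) (G * P) = perm_mat n (swap_adj i) * perm_mat n (braid_perm w)"
      by (simp only: eval_one_hom.mat_hom_mult[OF G P] P_one)
    also have "\<dots> = perm_mat n (braid_perm (g # w))"
      using braid_perm_less[OF w] by (simp add: perm_mat_mult braid_perm_Cons g)
    finally show ?thesis .
  qed
  ultimately show ?case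
    using mult_carrier_mat[OF G P] cd cd'
    by (intro exI[of _ "c' * c"] exI[of _ "d' * d"] exI[of _ "G * P"]) simp
qed

lemma burau_minor_nonzero:
  assumes n: "n \<ge> 1" and w: "braid_word n w" and knot: "closure_is_knot n w"
  shows "det (mat_delete (1\<^sub>m n - burau n w) (n - 1) (n - 1)) \<noteq> 0"
proof -
  obtain c d P where cd: "c * to_fract d = 1" "poly d 1 = 1" and P: "P \<in> carrier_mat n n"
    and burau_w: "burau n w = c \<cdot>\<^sub>m map_mat to_fract P"
    and P_one: "map_mat (\<lambda>p. poly p 1) P = perm_mat n (braid_perm w)"
    using burau_integral_form[OF w] by blast
  define Y where "Y = mat_delete (d \<cdot>\<^sub>m 1\<^sub>m n - P) (n - 1) (n - 1)"
  have P_one_idx: "poly (P $$ (i, j)) 1 = perm_mat n (braid_perm w) $$ (i, j)" if "i < n" "j < n" for i j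
    using arg_cong[OF P_one, of "\<lambda>M. M $$ (i, j)"] P that by simp
  have "mat_delete (1\<^sub>m n - burau n w) (n - 1) (n - 1) = c \<cdot>\<^sub>m map_mat to_fract Y"
    using P cd(1) by (intro eq_matI) (auto simp: Y_def burau_w mat_delete_def algebra_simps)
  then have minor: "det (mat_delete (1\<^sub>m n - burau n w) (n - 1) (n - 1)) = c ^ (n - 1) * to_fract (det Y)"
    using P by (simp add: Y_def mat_delete_def)
  have "map_mat (\<lambda>p. poly p 1) Y = mat_delete (1\<^sub>m n - perm_mat n (braid_perm w)) (n - 1) (n - 1)"
    using P cd(2) by (intro eq_matI) (auto simp: Y_def mat_delete_def perm_mat_def P_one_idx)
  moreover have "det (mat_delete (1\<^sub>m n - perm_mat n (braid_perm w)) (n - 1) (n - 1) :: rat mat) \<noteq> 0"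
    using n braid_perm_less[OF w] inj_on_subset[OF braid_perm_inj] knot
    by (intro det_minor_one_minus_perm_mat_nonzero) (auto simp: closure_is_knot_def)
  ultimately have "poly (det Y) 1 \<noteq> 0"
    by (metis eval_one_hom.hom_det)
  moreover have "c \<noteq> 0" using cd(1) by auto
  ultimately show ?thesis unfolding minor by auto
qed

lemma burau_minor_eq_alexander:
  assumes "braid_word n w"
  shows "det (mat_delete (1\<^sub>m n - burau n w) (n - 1) (n - 1)) = (-1) ^ (n - 1) * alexander n w"
proof -
  define A where "A = mat (n - 1) (n - 1) (\<lambda>(i, j). burau n w $$ (j, i) - (if i = j then 1 else 0))"
  have A: "A \<in> carrier_mat (n - 1) (n - 1)" by (simp add: A_def)
  have "mat_delete (1\<^sub>m n - burau n w) (n - 1) (n - 1) = (-1) \<cdot>\<^sub>m transpose_mat A"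
    using burau_carrier[of n w] by (intro eq_matI) (auto simp: mat_delete_def A_def)
  then have "det (mat_delete (1\<^sub>m n - burau n w) (n - 1) (n - 1)) = (-1) ^ (n - 1) * det A"
    using A by (simp add: det_transpose[OF A])
  then show ?thesis
    by (simp only: alexander_eq_det_burau[OF assms] A_def)
qed

lemma qint_nonzero:
  assumes "n \<ge> 1"
  shows "qint n \<noteq> 0"
proof -
  have qint_eq: "qint n = to_fract (\<Sum>i<n. [:0, 1:] ^ i)"
    by (simp only: qint_def to_fract_hom.hom_sum to_fract_hom.hom_power to_fract_X)
  have "poly (\<Sum>i<n. [:0, 1::rat:] ^ i) 1 = of_nat n"
    by (simp add: poly_sum)
  then have "(\<Sum>i<n. [:0, 1::rat:] ^ i) \<noteq> 0"
    using assms by auto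
  then show ?thesis
    unfolding qint_eq to_fract_eq_0_iff .
qed

theorem theorem1p2:
  fixes n :: nat and w :: braid_word
  assumes "n \<ge> 1" and "braid_word n w" and "closure_is_knot n w"
  shows "\<exists>(\<epsilon>::qfield)\<in>{1, -1}. \<exists>k::int.
           simple_pole_residue (braid_zeta n w) 1
             (- (1 / qint n) * inverse (\<epsilon> * qq powi k * alexander n w))"
proof -
  define \<epsilon> :: qfield where "\<epsilon> = (-1) ^ (n - 1)"
  define minor where "minor = det (mat_delete (1\<^sub>m n - burau n w) (n - 1) (n - 1))"
  obtain h where zeta_den: "zeta_den n w = [:-1, 1:] * h"
    and h_one: "poly h 1 = - (\<Sum>k<n. qq ^ k) / qq ^ (n - 1) * minor"
    using det_one_minus_X_mat_root_one[OF burau_carrier assms(1) vec_carrier _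
        burau_fixes_q_powers[OF assms(2)] burau_transpose_fixes_ones[OF assms(2)]]
      assms(1) qq_nonzero
    by (auto simp: zeta_den_def minor_def)
  have minor_alexander: "minor = \<epsilon> * alexander n w"
    unfolding minor_def \<epsilon>_def by (rule burau_minor_eq_alexander[OF assms(2)])
  have "poly h 1 \<noteq> 0"
    using h_one qint_nonzero[OF assms(1)] burau_minor_nonzero[OF assms] qq_nonzero
    by (simp add: minor_def qint_def)
  moreover have "1 / poly h 1 = - (1 / qint n) * inverse (\<epsilon> * qq powi - int (n - 1) * alexander n w)"
    using qq_nonzero by (simp add: h_one minor_alexander qint_def \<epsilon>_def power_int_minus field_simps)
  ultimately have "simple_pole_residue (braid_zeta n w) 1
      (- (1 / qint n) * inverse (\<epsilon> * qq powi - int (n - 1) * alexander n w))"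
    unfolding simple_pole_residue_def braid_zeta_def zeta_den
    by (intro exI[of _ 1] exI[of _ h]) auto
  moreover have "\<epsilon> \<in> {1, -1}"
    by (cases "even (n - 1)") (auto simp: \<epsilon>_def)
  ultimately show ?thesis by blast
qed

end
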